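(* Assume the setting and notation described in the context, and suppose the event $\mathcal{E}$ holds. There exist absolute constants $C_1, C_2>0$ such that the following holds. For any $\gamma\in(0,1)$, if $$ m \ \ge\ C_1 \frac{(1+\theta)^2}{\theta^2 \gamma^2(1-\sqrt{\gamma})^2} \max_{1\le p \le k}p\, s^2(p)\log n, $$ then the final selected support $S^{(k)}$ of the SEP algorithm satisfies $\|\mathbf{v}_{S^{(k)}}\|_2\ge \sqrt{\gamma}$, and the output $\hat{\mathbf{v}}$ of SEP satisfies $$ \sin\angle(\hat{\mathbf{v}},\mathbf{v})\ \le\ \sqrt{1-\gamma} + \frac{C_2(1+\theta)}{\theta \gamma}\sqrt{\frac{k\log n}{m}}. $$
   Context: Let $n\ge 2$, $m\ge 1$, $\theta>0$, $k\in\{1,\dots,n\}$. Let $\mathbf{v}\in\mathbb{R}^n$ with $\|\mathbf{v}\|_2=1$ and at most $k$ nonzero entries. Let $\mathbf{x}_1,\dots,\mathbf{x}_m$ be i.i.d. $\mathcal{N}(\mathbf{0},\boldsymbol{\Sigma})$ with $\boldsymbol{\Sigma}=\mathbf{I}_n+\theta\mathbf{v}\mathbf{v}^\top$. Put $\hat{\boldsymbol{\Sigma}}=\frac1m\sum_{i=1}^m\mathbf{x}_i\mathbf{x}_i^\top$, $\hat{\boldsymbol{\Gamma}}=\hat{\boldsymbol{\Sigma}}-\mathbf{I}_n$, and $\mathbf{W}=\hat{\boldsymbol{\Gamma}}-\theta\mathbf{v}\mathbf{v}^\top$. For $S,U\subseteq[n]=\{1,\dots,n\}$, $\mathbf{A}_{S,U}$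 is the submatrix with rows in $S$ and columns in $U$, and $\mathbf{v}_S$ is the restriction of $\mathbf{v}$ to $S$. $\|\cdot\|_2$ is the Euclidean norm for vectors and the spectral norm for matrices. Let $v_{(1)}\ge v_{(2)}\ge\cdots$ be the absolute values of the entries of $\mathbf{v}$ sorted decreasingly, and define the structure function $s(p)=\big(\sum_{i=1}^p v_{(i)}^2\big)^{-1}$ for $1\le p\le k$. For unit vectors $\mathbf{a},\mathbf{b}$, $\sin\angle(\mathbf{a},\mathbf{b})=\sqrt{1-\langle\mathbf{a},\mathbf{b}\rangle^2}$. Fix an absolute constant $C_0>0$; the event $\mathcal{E}$ is: for every $p\in[n]$ and every $S\subseteq[n]$ with $|S|=p$, $\|\mathbf{W}_{S,S}\|_2\le C_0(1+\theta)\sqrt{p\log n/m}$. "Absolute constant" means a number not depending on $n,m,k,\theta,\mathbf{v},\gamma$. SEP algorithm (input $\hat{\boldsymbol{\Gamma}}$ and $k$): set $S^{(1)}=\{j^\ast\}$ where $j^\ast$ maximizes $|\hat{\boldsymbol{\Gamma}}_{jj}|$. For $p=1,\dots,k-1$: let $\hat{\mathbf{e}}^{(p)}$ be a unit eigenvector for the largest eigenvalue of $\hat{\boldsymbol{\Gamma}}_{S^{(p)},S^{(p)}}$, zero-padded to $\mathbb{R}^n$; let $\mathbf{u}^{(p)}=\hat{\boldsymbol{\Gamma}}\hat{\mathbf{e}}^{(p)}$; let $S^{(p+1)}$ be the indices of the $p+1$ largest entries of $|\mathbf{u}^{(p)}|$. Output $\hat{\mathbf{v}}$: a unit eigenvector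 for the largest eigenvalue of $\hat{\boldsymbol{\Gamma}}_{S^{(k)},S^{(k)}}$, zero-padded to $\mathbb{R}^n$. *)

theory Defs
  imports Complex_Main
begin

text \<open>Conventions: indices are 0-based, [n] is rendered as {..<n}.
Vectors are functions nat => real, matrices nat => nat => real;
only entries with indices in {..<n} are relevant.\<close>

definition sample_Gamma :: "nat \<Rightarrow> (nat \<Rightarrow> nat \<Rightarrow> real) \<Rightarrow> nat \<Rightarrow> nat \<Rightarrow> real" where
  "sample_Gamma m x i j = (1 / real m) * (\<Sum>l<m. x l i * x l j) - (if i = j then 1 else 0)"

definition spec_norm_sub :: "(nat \<Rightarrow> nat \<Rightarrow> real) \<Rightarrow> nat set \<Rightarrow> nat set \<Rightarrow> real" where
  "spec_norm_sub A S U =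
     Sup {sqrt (\<Sum>i\<in>S. (\<Sum>j\<in>U. A i j * y j)^2) | y. (\<Sum>j\<in>U. (y j)^2) = 1}"

definition event_E :: "real \<Rightarrow> nat \<Rightarrow> nat \<Rightarrow> real \<Rightarrow> (nat \<Rightarrow> nat \<Rightarrow> real) \<Rightarrow> bool" where
  "event_E C0 n m \<theta> W \<longleftrightarrow>
     (\<forall>p\<in>{1..n}. \<forall>S. S \<subseteq> {..<n} \<and> card S = p \<longrightarrow>
        spec_norm_sub W S S \<le> C0 * (1 + \<theta>) * sqrt (real p * ln (real n) / real m))"

definition is_eig_sub :: "(nat \<Rightarrow> nat \<Rightarrow> real) \<Rightarrow> nat set \<Rightarrow> real \<Rightarrow> (nat \<Rightarrow> real) \<Rightarrow> bool" where
  "is_eig_sub A S lam y \<longleftrightarrow> (\<exists>i\<in>S. y i \<noteq> 0) \<and> (\<forall>i\<in>S. (\<Sum>j\<in>S. A i j * y j) = lam * y i)"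

definition top_eigvec :: "(nat \<Rightarrow> nat \<Rightarrow> real) \<Rightarrow> nat set \<Rightarrow> (nat \<Rightarrow> real) \<Rightarrow> bool" where
  "top_eigvec A S e \<longleftrightarrow>
     (\<forall>i. i \<notin> S \<longrightarrow> e i = 0) \<and> (\<Sum>i\<in>S. (e i)^2) = 1 \<and>
     (\<exists>lam. is_eig_sub A S lam e \<and> (\<forall>mu y. is_eig_sub A S mu y \<longrightarrow> mu \<le> lam))"

definition top_entries :: "nat \<Rightarrow> (nat \<Rightarrow> real) \<Rightarrow> nat \<Rightarrow> nat set \<Rightarrow> bool" where
  "top_entries n u q T \<longleftrightarrow>
     T \<subseteq> {..<n} \<and> card T = q \<and> (\<forall>i\<in>T. \<forall>j\<in>{..<n} - T. \<bar>u j\<bar> \<le> \<bar>u i\<bar>)"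

text \<open>A valid run of SEP (any admissible tie-breaking / eigenvector choice):
  Sseq p = S^(p), e p = \<^emph>\<open>e\<close>^(p), vhat = output.\<close>
definition sep_run :: "(nat \<Rightarrow> nat \<Rightarrow> real) \<Rightarrow> nat \<Rightarrow> nat \<Rightarrow> (nat \<Rightarrow> nat set) \<Rightarrow>
                       (nat \<Rightarrow> nat \<Rightarrow> real) \<Rightarrow> (nat \<Rightarrow> real) \<Rightarrow> bool" where
  "sep_run G n k Sseq e vhat \<longleftrightarrow>
     (\<exists>j<n. Sseq 1 = {j} \<and> (\<forall>i<n. \<bar>G i i\<bar> \<le> \<bar>G j j\<bar>)) \<and>
     (\<forall>p\<in>{1..<k}. top_eigvec G (Sseq p) (e p) \<and>
        top_entries n (\<lambda>i. \<Sum>j<n. G i j * e p j) (p + 1) (Sseq (Suc p))) \<and>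
     top_eigvec G (Sseq k) vhat"

text \<open>Absolute values of entries of v sorted decreasingly; v_(i) = sorted_abs v n ! (i-1).\<close>
definition sorted_abs :: "(nat \<Rightarrow> real) \<Rightarrow> nat \<Rightarrow> real list" where
  "sorted_abs v n = rev (sort (map (\<lambda>i. \<bar>v i\<bar>) [0..<n]))"

definition struct_fun :: "(nat \<Rightarrow> real) \<Rightarrow> nat \<Rightarrow> nat \<Rightarrow> real" where
  "struct_fun v n p = 1 / (\<Sum>i=1..p. (sorted_abs v n ! (i - 1))^2)"

definition sin_angle :: "nat \<Rightarrow> (nat \<Rightarrow> real) \<Rightarrow> (nat \<Rightarrow> real) \<Rightarrow> real" where
  "sin_angle n a b = sqrt (1 - (\<Sum>i<n. a i * b i)^2)"

end

theory Submission
  imports Defs "HOL-Analysis.Analysis"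
begin

text \<open>
  Write the sample matrix as \<open>\<Gamma> = \<theta> v v\<^sup>T + W\<close>. On an index set of size \<open>p\<close> the event bounds
  the noise \<open>W\<close> by \<open>E(p) = C0 (1 + \<theta>) sqrt (p log n / m)\<close>, and the sample size makes \<open>E(p)\<close> a
  small multiple of \<open>\<theta> \<gamma> (1 - sqrt \<gamma>) / s(p)\<close>. SEP then keeps the invariant
  \<open>|v_S|\<^sup>2 \<ge> \<gamma> / s(p)\<close> for its support \<open>S = S(p)\<close>: the top eigenvalue of \<open>\<Gamma>\<close> on \<open>S\<close> is at
  least \<open>\<theta> |v_S|\<^sup>2 - E(p)\<close>, which forces the top eigenvector \<open>e\<close> to be well aligned with \<open>v\<close>.
  Hence \<open>\<Gamma> e = \<theta> \<langle>e, v\<rangle> v + W e\<close> is a noisy multiple of \<open>v\<close>, and its \<open>p + 1\<close> largest entries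
  capture almost as much of \<open>v\<close> as the \<open>p + 1\<close> largest entries of \<open>v\<close> itself. For \<open>p = k\<close> the
  support holds a \<open>\<gamma>\<close> fraction of \<open>v\<close>, and comparing the eigen-equation on \<open>S(k)\<close> with \<open>v\<close>
  bounds the angle.
\<close>

section \<open>Quadratic forms and the spectral norm\<close>

definition quad_form :: "(nat \<Rightarrow> nat \<Rightarrow> real) \<Rightarrow> nat set \<Rightarrow> (nat \<Rightarrow> real) \<Rightarrow> real" where
  "quad_form A S y = (\<Sum>i\<in>S. y i * (\<Sum>j\<in>S. A i j * y j))"

lemma sum_sq_normalize:
  fixes y :: "nat \<Rightarrow> real"
  assumes "(\<Sum>i\<in>S. (y i)^2) \<noteq> 0"
  shows "(\<Sum>i\<in>S. (y i / sqrt (\<Sum>i\<in>S. (y i)^2))^2) = 1"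
proof -
  have "(\<Sum>i\<in>S. (y i)^2) > 0" using assms by (simp add: less_le sum_nonneg)
  then show ?thesis by (simp add: power_divide flip: sum_divide_distrib)
qed

lemma spec_norm_sub_upper:
  fixes A :: "nat \<Rightarrow> nat \<Rightarrow> real"
  assumes "(\<Sum>j\<in>U. (y j)^2) = 1"
  shows "sqrt (\<Sum>i\<in>S. (\<Sum>j\<in>U. A i j * y j)^2) \<le> spec_norm_sub A S U"
proof -
  let ?M = "{sqrt (\<Sum>i\<in>S. (\<Sum>j\<in>U. A i j * y j)^2) | y. (\<Sum>j\<in>U. (y j)^2) = 1}"
  have "bdd_above ?M"
  proof (rule bdd_aboveI)
    fix r assume "r \<in> ?M"
    then obtain w where w: "(\<Sum>j\<in>U. (w j)^2) = 1" and r: "r = sqrt (\<Sum>i\<in>S. (\<Sum>j\<in>U. A i j * w j)^2)"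
      by blast
    have "(\<Sum>j\<in>U. A i j * w j)^2 \<le> (\<Sum>j\<in>U. (A i j)^2)" for i
      using Cauchy_Schwarz_ineq_sum[of "A i" w U] w by simp
    then show "r \<le> sqrt (\<Sum>i\<in>S. \<Sum>j\<in>U. (A i j)^2)"
      unfolding r by (intro real_sqrt_le_mono sum_mono)
  qed
  moreover have "sqrt (\<Sum>i\<in>S. (\<Sum>j\<in>U. A i j * y j)^2) \<in> ?M" using assms by blast
  ultimately show ?thesis unfolding spec_norm_sub_def by (rule cSup_upper[rotated])
qed

lemma spec_norm_sub_bound:
  fixes W :: "nat \<Rightarrow> nat \<Rightarrow> real"
  assumes "finite X" and "spec_norm_sub W X X \<le> B"
  shows "(\<Sum>i\<in>X. (\<Sum>j\<in>X. W i j * y j)^2) \<le> B^2 * (\<Sum>j\<in>X. (y j)^2)"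
proof (cases "(\<Sum>j\<in>X. (y j)^2) = 0")
  case True
  then have "\<forall>j\<in>X. y j = 0" using assms(1) by (simp add: sum_nonneg_eq_0_iff)
  then show ?thesis by simp
next
  case False
  define s where "s = (\<Sum>j\<in>X. (y j)^2)"
  have s: "s > 0" using False by (simp add: s_def less_le sum_nonneg)
  have "sqrt (\<Sum>i\<in>X. (\<Sum>j\<in>X. W i j * (y j / sqrt s))^2) \<le> B"
    using spec_norm_sub_upper[where A = W and S = X, OF sum_sq_normalize[OF False]] assms(2)
    unfolding s_def by linarith
  moreover have "(\<Sum>i\<in>X. (\<Sum>j\<in>X. W i j * (y j / sqrt s))^2) = (\<Sum>i\<in>X. (\<Sum>j\<in>X. W i j * y j)^2) / s"
    using s by (simp add: power_divide flip: sum_divide_distrib)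
  ultimately have "(\<Sum>i\<in>X. (\<Sum>j\<in>X. W i j * y j)^2) / s \<le> B^2" by (metis sqrt_le_D)
  then show ?thesis using s by (simp add: s_def divide_le_eq mult.commute)
qed

lemma quad_form_abs_le:
  fixes W :: "nat \<Rightarrow> nat \<Rightarrow> real"
  assumes "finite X" and "spec_norm_sub W X X \<le> B" and "0 \<le> B"
  shows "\<bar>quad_form W X y\<bar> \<le> B * (\<Sum>j\<in>X. (y j)^2)"
proof -
  define s where "s = (\<Sum>j\<in>X. (y j)^2)"
  have s: "s \<ge> 0" unfolding s_def by (intro sum_nonneg) simp
  have "(quad_form W X y)^2 \<le> s * (\<Sum>i\<in>X. (\<Sum>j\<in>X. W i j * y j)^2)"
    unfolding s_def quad_form_def by (rule Cauchy_Schwarz_ineq_sum)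
  also have "\<dots> \<le> s * (B^2 * s)"
    using spec_norm_sub_bound[OF assms(1,2)] s unfolding s_def by (simp add: mult_left_mono)
  also have "\<dots> = (B * s)^2" by (simp add: power2_eq_square)
  finally have "\<bar>quad_form W X y\<bar> \<le> \<bar>B * s\<bar>" by (simp only: abs_le_square_iff)
  then show ?thesis using assms(3) s unfolding s_def by simp
qed

lemma quad_form_cong:
  "(\<And>i. i \<in> S \<Longrightarrow> x i = y i) \<Longrightarrow> quad_form A S x = quad_form A S y"
  unfolding quad_form_def by (intro sum.cong) simp_all

lemma quad_form_scale: "quad_form A S (\<lambda>i. c * x i) = c^2 * quad_form A S x"
  unfolding quad_form_def by (simp add: sum_distrib_left algebra_simps power2_eq_square)

lemma bilinear_form_sym:
  fixes A :: "nat \<Rightarrow> nat \<Rightarrow> real"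
  assumes "\<forall>i\<in>S. \<forall>j\<in>S. A i j = A j i"
  shows "(\<Sum>i\<in>S. x i * (\<Sum>j\<in>S. A i j * y j)) = (\<Sum>i\<in>S. y i * (\<Sum>j\<in>S. A i j * x j))"
proof -
  have "(\<Sum>i\<in>S. x i * (\<Sum>j\<in>S. A i j * y j)) = (\<Sum>i\<in>S. \<Sum>j\<in>S. x i * A i j * y j)"
    by (simp add: sum_distrib_left mult.assoc)
  also have "\<dots> = (\<Sum>j\<in>S. \<Sum>i\<in>S. y j * (A j i * x i))"
    using assms by (subst sum.swap) (intro sum.cong refl; simp add: mult.commute mult.left_commute)
  finally show ?thesis by (simp add: sum_distrib_left)
qed

lemma quad_form_add:
  fixes A :: "nat \<Rightarrow> nat \<Rightarrow> real"
  assumes "\<forall>i\<in>S. \<forall>j\<in>S. A i j = A j i"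
  shows "quad_form A S (\<lambda>i. y i + t * g i)
           = quad_form A S y + 2 * t * (\<Sum>i\<in>S. g i * (\<Sum>j\<in>S. A i j * y j)) + t^2 * quad_form A S g"
proof -
  have "(\<Sum>j\<in>S. A i j * (y j + t * g j)) = (\<Sum>j\<in>S. A i j * y j) + t * (\<Sum>j\<in>S. A i j * g j)" for i
    by (simp add: sum.distrib sum_distrib_left distrib_left mult.left_commute)
  then have "quad_form A S (\<lambda>i. y i + t * g i)
      = quad_form A S y + t * (\<Sum>i\<in>S. y i * (\<Sum>j\<in>S. A i j * g j))
        + t * (\<Sum>i\<in>S. g i * (\<Sum>j\<in>S. A i j * y j)) + t^2 * quad_form A S g"
    unfolding quad_form_def by (simp add: sum.distrib sum_distrib_left algebra_simps power2_eq_square)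
  then show ?thesis using bilinear_form_sym[OF assms, of y g] by simp
qed

lemma sum_sq_add:
  fixes y g :: "nat \<Rightarrow> real"
  shows "(\<Sum>i\<in>S. (y i + t * g i)^2)
           = (\<Sum>i\<in>S. (y i)^2) + 2 * t * (\<Sum>i\<in>S. y i * g i) + t^2 * (\<Sum>i\<in>S. (g i)^2)"
  by (simp add: sum.distrib sum_distrib_left algebra_simps power2_eq_square)

lemma quad_form_rank_one_add:
  fixes G W :: "nat \<Rightarrow> nat \<Rightarrow> real"
  assumes "\<forall>i\<in>S. \<forall>j\<in>S. G i j = \<theta> * v i * v j + W i j"
  shows "quad_form G S y = \<theta> * (\<Sum>i\<in>S. y i * v i)^2 + quad_form W S y"
proof -
  define s where "s = (\<Sum>j\<in>S. y j * v j)"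
  have "(\<Sum>j\<in>S. G i j * y j) = \<theta> * v i * s + (\<Sum>j\<in>S. W i j * y j)" if "i \<in> S" for i
    using assms that by (simp add: s_def sum.distrib sum_distrib_left algebra_simps)
  then have "quad_form G S y = (\<Sum>i\<in>S. y i * (\<theta> * v i * s)) + quad_form W S y"
    unfolding quad_form_def by (simp add: sum.distrib algebra_simps)
  also have "(\<Sum>i\<in>S. y i * (\<theta> * v i * s)) = \<theta> * s * s"
    by (simp add: s_def sum_distrib_left sum_distrib_right mult_ac)
  finally show ?thesis by (simp add: s_def power2_eq_square)
qed

section \<open>Top eigenvectors of symmetric matrices\<close>

lemma linear_coeff_zero_if_quadratic_nonpos:
  fixes a c :: real
  assumes "\<And>t. 0 < t \<Longrightarrow> a * t + c * t^2 \<le> 0" and "0 \<le> a"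
  shows "a = 0"
proof (rule ccontr)
  assume "a \<noteq> 0"
  then have a: "a > 0" using assms(2) by simp
  define t where "t = a / (\<bar>c\<bar> + 1)"
  have t: "t > 0" unfolding t_def using a by simp
  have "\<bar>c\<bar> * t < a" unfolding t_def using a by (simp add: field_simps)
  then have "0 < t * (a - \<bar>c\<bar> * t)" using t by simp
  also have "\<dots> \<le> a * t + c * t^2"
  proof -
    have "0 \<le> (c + \<bar>c\<bar>) * t^2" by simp
    then show ?thesis by (simp add: algebra_simps power2_eq_square)
  qed
  finally show False using assms(1)[OF t] by simp
qed

lemma quad_form_le_of_unit_bound:
  fixes A :: "nat \<Rightarrow> nat \<Rightarrow> real"
  assumes "finite S" and "\<And>w. (\<Sum>i\<in>S. (w i)^2) = 1 \<Longrightarrow> quad_form A S w \<le> M"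
  shows "quad_form A S y \<le> M * (\<Sum>i\<in>S. (y i)^2)"
proof (cases "(\<Sum>i\<in>S. (y i)^2) = 0")
  case True
  then have "\<forall>i\<in>S. y i = 0" using assms(1) by (simp add: sum_nonneg_eq_0_iff)
  then show ?thesis using True by (simp add: quad_form_def)
next
  case False
  define s where "s = (\<Sum>i\<in>S. (y i)^2)"
  have s: "s > 0" using False by (simp add: s_def less_le sum_nonneg)
  have "quad_form A S (\<lambda>i. y i / sqrt s) \<le> M"
    using assms(2) sum_sq_normalize[OF False] unfolding s_def by simp
  moreover have "quad_form A S (\<lambda>i. y i / sqrt s) = quad_form A S y / s"
    using quad_form_scale[of A S "1 / sqrt s" y] s by (simp add: power_divide)
  ultimately have "quad_form A S y / s \<le> M" by simp
  then show ?thesis using s by (simp add: s_def divide_le_eq mult.commute)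
qed

lemma compact_unit_sphere_on:
  "compact ({y :: nat \<Rightarrow> real. \<forall>i. y i \<in> (if i \<in> S then {-1..1} else {0})}
             \<inter> {y. (\<Sum>i\<in>S. (y i)^2) = 1})"
proof (rule compact_Int_closed)
  let ?B = "\<lambda>i::nat. if i \<in> S then {-1..1::real} else {0}"
  have "compactin (product_topology (\<lambda>i. euclidean) UNIV) (PiE UNIV ?B)"
    by (subst compactin_PiE) auto
  then show "compact {y. \<forall>i. y i \<in> ?B i}"
    by (simp add: euclidean_product_topology PiE_UNIV_domain Pi_def)
  show "closed {y::nat\<Rightarrow>real. (\<Sum>i\<in>S. (y i)^2) = 1}"
    by (rule closed_Collect_eq) (intro continuous_intros continuous_on_product_coordinates)+
qed

lemma quad_form_attains_max_on_sphere:
  fixes A :: "nat \<Rightarrow> nat \<Rightarrow> real" and z :: "nat \<Rightarrow> real"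
  assumes z: "(\<Sum>i\<in>S. (z i)^2) = 1"
  obtains y :: "nat \<Rightarrow> real" where "(\<Sum>i\<in>S. (y i)^2) = 1"
    and "\<And>w :: nat \<Rightarrow> real. (\<Sum>i\<in>S. (w i)^2) = 1 \<Longrightarrow> quad_form A S w \<le> quad_form A S y"
proof -
  have fin: "finite S" using z by (cases "finite S") auto
  define K :: "(nat \<Rightarrow> real) set"
    where "K = {y. \<forall>i. y i \<in> (if i \<in> S then {-1..1} else {0})} \<inter> {y. (\<Sum>i\<in>S. (y i)^2) = 1}"
  have "compact K" unfolding K_def by (rule compact_unit_sphere_on)
  have restrict_in_K: "(\<lambda>i. if i \<in> S then w i else 0) \<in> K" if w: "(\<Sum>i\<in>S. (w i)^2) = 1" for w
  proof -
    have "(w i)^2 \<le> 1" if "i \<in> S" for i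
      using member_le_sum[of i S "\<lambda>i. (w i)^2"] fin that w by simp
    then show ?thesis unfolding K_def using w by (auto simp: abs_square_le_1 abs_le_iff)
  qed
  have "continuous_on K (quad_form A S)"
    unfolding quad_form_def
    by (intro continuous_intros; rule continuous_on_subset[OF continuous_on_product_coordinates]; simp)
  then obtain y where y: "y \<in> K" and y_max: "\<forall>w\<in>K. quad_form A S w \<le> quad_form A S y"
    using continuous_attains_sup[OF \<open>compact K\<close>] restrict_in_K[of z, OF z] by blast
  show thesis
  proof
    show "(\<Sum>i\<in>S. (y i)^2) = 1" using y unfolding K_def by simp
    fix w :: "nat \<Rightarrow> real" assume "(\<Sum>i\<in>S. (w i)^2) = 1"
    then show "quad_form A S w \<le> quad_form A S y"
      using y_max restrict_in_K quad_form_cong[of S w "\<lambda>i. if i \<in> S then w i else 0" A] by simp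
  qed
qed

text \<open>If a maximiser \<open>y\<close> of the Rayleigh quotient were not an eigenvector, moving it along its
  residual \<open>A y - M y\<close> would increase the quotient to first order.\<close>
lemma quad_form_max_is_eig:
  fixes A :: "nat \<Rightarrow> nat \<Rightarrow> real"
  assumes sym: "\<forall>i\<in>S. \<forall>j\<in>S. A i j = A j i" and fin: "finite S"
    and y: "(\<Sum>i\<in>S. (y i)^2) = 1"
    and max: "\<And>w. quad_form A S w \<le> quad_form A S y * (\<Sum>i\<in>S. (w i)^2)"
  shows "is_eig_sub A S (quad_form A S y) y"
proof -
  define M where "M = quad_form A S y"
  define g where "g i = (\<Sum>j\<in>S. A i j * y j) - M * y i" for i
  have residual: "(\<Sum>i\<in>S. g i * (\<Sum>j\<in>S. A i j * y j)) - M * (\<Sum>i\<in>S. y i * g i) = (\<Sum>i\<in>S. (g i)^2)"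
  proof -
    have "(\<Sum>i\<in>S. g i * (\<Sum>j\<in>S. A i j * y j)) - M * (\<Sum>i\<in>S. y i * g i)
        = (\<Sum>i\<in>S. g i * ((\<Sum>j\<in>S. A i j * y j) - M * y i))"
      by (simp add: sum_subtractf sum_distrib_left algebra_simps)
    then show ?thesis by (simp add: g_def power2_eq_square)
  qed
  have "2 * (\<Sum>i\<in>S. (g i)^2) = 0"
  proof (rule linear_coeff_zero_if_quadratic_nonpos)
    fix t :: real
    have "quad_form A S (\<lambda>i. y i + t * g i) \<le> M * (\<Sum>i\<in>S. (y i + t * g i)^2)"
      using max unfolding M_def by blast
    then show "(2 * (\<Sum>i\<in>S. (g i)^2)) * t + (quad_form A S g - M * (\<Sum>i\<in>S. (g i)^2)) * t^2 \<le> 0"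
      using residual unfolding quad_form_add[OF sym] sum_sq_add y M_def[symmetric]
      by (simp add: algebra_simps)
  qed (simp add: sum_nonneg)
  then have "\<forall>i\<in>S. g i = 0" using fin by (simp add: sum_nonneg_eq_0_iff)
  then have "\<forall>i\<in>S. (\<Sum>j\<in>S. A i j * y j) = M * y i" by (simp add: g_def)
  moreover have "\<exists>i\<in>S. y i \<noteq> 0"
  proof (rule ccontr)
    assume "\<not> (\<exists>i\<in>S. y i \<noteq> 0)"
    then have "(\<Sum>i\<in>S. (y i)^2) = 0" by simp
    then show False using y by simp
  qed
  ultimately show ?thesis unfolding is_eig_sub_def M_def by blast
qed

lemma exists_eig_ge_quad_form:
  fixes A :: "nat \<Rightarrow> nat \<Rightarrow> real"
  assumes sym: "\<forall>i\<in>S. \<forall>j\<in>S. A i j = A j i" and z: "(\<Sum>i\<in>S. (z i)^2) = 1"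
  obtains mu y where "is_eig_sub A S mu y" and "quad_form A S z \<le> mu"
proof -
  have fin: "finite S" using z by (cases "finite S") auto
  obtain y where y: "(\<Sum>i\<in>S. (y i)^2) = 1"
    and y_max: "\<And>w. (\<Sum>i\<in>S. (w i)^2) = 1 \<Longrightarrow> quad_form A S w \<le> quad_form A S y"
    using quad_form_attains_max_on_sphere[OF z] by blast
  have "is_eig_sub A S (quad_form A S y) y"
    using quad_form_max_is_eig[OF sym fin y] quad_form_le_of_unit_bound[OF fin y_max] by blast
  then show thesis using that y_max[OF z] by blast
qed

lemma top_eigvecD:
  assumes "top_eigvec A S e"
  shows "(\<Sum>i\<in>S. (e i)^2) = 1" and "S \<noteq> {}" and "\<And>i. i \<notin> S \<Longrightarrow> e i = 0"
  using assms unfolding top_eigvec_def by auto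

lemma top_eigvec_rank_one_bounds:
  fixes G W :: "nat \<Rightarrow> nat \<Rightarrow> real" and v e :: "nat \<Rightarrow> real"
  assumes sym: "\<forall>i\<in>S. \<forall>j\<in>S. G i j = G j i" and top: "top_eigvec G S e"
    and spiked: "\<forall>i\<in>S. \<forall>j\<in>S. G i j = \<theta> * v i * v j + W i j"
    and W_bound: "\<And>y. \<bar>quad_form W S y\<bar> \<le> E * (\<Sum>i\<in>S. (y i)^2)"
    and v_pos: "(\<Sum>i\<in>S. (v i)^2) \<noteq> 0"
  obtains lam where "\<forall>i\<in>S. (\<Sum>j\<in>S. G i j * e j) = lam * e i"
    and "\<theta> * (\<Sum>i\<in>S. (v i)^2) - E \<le> lam" and "lam \<le> \<theta> * (\<Sum>i\<in>S. e i * v i)^2 + E"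
proof -
  obtain lam where e_unit: "(\<Sum>i\<in>S. (e i)^2) = 1" and e_eig: "is_eig_sub G S lam e"
    and lam_max: "\<And>mu y. is_eig_sub G S mu y \<Longrightarrow> mu \<le> lam"
    using top unfolding top_eigvec_def by blast
  have eq: "\<forall>i\<in>S. (\<Sum>j\<in>S. G i j * e j) = lam * e i" using e_eig unfolding is_eig_sub_def by blast
  define \<alpha> where "\<alpha> = (\<Sum>i\<in>S. (v i)^2)"
  have \<alpha>: "\<alpha> > 0" using v_pos by (simp add: \<alpha>_def less_le sum_nonneg)
  define z where "z i = v i / sqrt \<alpha>" for i
  have z_unit: "(\<Sum>i\<in>S. (z i)^2) = 1" using sum_sq_normalize[OF v_pos] by (simp add: z_def \<alpha>_def)
  have "(\<Sum>i\<in>S. z i * v i) = sqrt \<alpha>"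
    using \<alpha> by (simp add: z_def \<alpha>_def power2_eq_square real_div_sqrt flip: sum_divide_distrib)
  then have "quad_form G S z = \<theta> * \<alpha> + quad_form W S z"
    using quad_form_rank_one_add[OF spiked] \<alpha> by simp
  moreover have "\<bar>quad_form W S z\<bar> \<le> E" using W_bound[of z] z_unit by simp
  moreover obtain mu y where "is_eig_sub G S mu y" and "quad_form G S z \<le> mu"
    using exists_eig_ge_quad_form[OF sym z_unit] by blast
  ultimately have lower: "\<theta> * \<alpha> - E \<le> lam" using lam_max by fastforce
  have "quad_form G S e = lam"
    using eq e_unit by (simp add: quad_form_def power2_eq_square mult.left_commute flip: sum_distrib_left)
  then have "lam = \<theta> * (\<Sum>i\<in>S. e i * v i)^2 + quad_form W S e" using quad_form_rank_one_add[OF spiked] by simp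
  moreover have "\<bar>quad_form W S e\<bar> \<le> E" using W_bound[of e] e_unit by simp
  ultimately show thesis using that eq lower \<alpha>_def by fastforce
qed

lemma misalignment_le_residual:
  fixes e v g :: "nat \<Rightarrow> real"
  assumes e_unit: "(\<Sum>i\<in>S. (e i)^2) = 1"
    and eig: "\<forall>i\<in>S. \<theta> * c * v i + g i = lam * e i"
    and c: "c = (\<Sum>i\<in>S. e i * v i)"
  shows "lam^2 * ((\<Sum>i\<in>S. (v i)^2) - c^2) \<le> (\<Sum>i\<in>S. (v i)^2) * (\<Sum>i\<in>S. (g i)^2)"
proof -
  define \<alpha> where "\<alpha> = (\<Sum>i\<in>S. (v i)^2)"
  have "g i = lam * e i - \<theta> * c * v i" if "i \<in> S" for i
    using eig that by (metis add.commute eq_diff_eq)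
  then have "(\<Sum>i\<in>S. (g i)^2) = (\<Sum>i\<in>S. (lam * e i - \<theta> * c * v i)^2)" by simp
  also have "\<dots> = lam^2 * (\<Sum>i\<in>S. (e i)^2) - 2 * lam * \<theta> * c * (\<Sum>i\<in>S. e i * v i)
      + \<theta>^2 * c^2 * (\<Sum>i\<in>S. (v i)^2)"
    by (simp add: power2_diff sum_subtractf sum.distrib sum_distrib_left algebra_simps power_mult_distrib)
  finally have g_sq: "(\<Sum>i\<in>S. (g i)^2) = lam^2 - 2 * lam * \<theta> * c^2 + \<theta>^2 * c^2 * \<alpha>"
    using e_unit c \<alpha>_def by (simp add: power2_eq_square)
  have "\<alpha> * (\<Sum>i\<in>S. (g i)^2) - lam^2 * (\<alpha> - c^2) = c^2 * (lam - \<theta> * \<alpha>)^2"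
    unfolding g_sq by (simp add: algebra_simps power2_eq_square)
  then show ?thesis unfolding \<alpha>_def[symmetric] by (metis diff_ge_0_iff_ge zero_le_mult_iff zero_le_power2)
qed

section \<open>Largest entries\<close>

lemma sum_sq_le_of_top_entries:
  fixes u :: "nat \<Rightarrow> real"
  assumes fin: "finite A" "finite B" and card_eq: "card A = card B"
    and top: "\<forall>i\<in>A. \<forall>j\<in>B - A. \<bar>u j\<bar> \<le> \<bar>u i\<bar>"
  shows "(\<Sum>i\<in>B. (u i)^2) \<le> (\<Sum>i\<in>A. (u i)^2)"
proof -
  have card_diff: "card (B - A) = card (A - B)"
    using fin card_eq by (metis Int_commute card_Diff_subset_Int finite_Int inf_le1)
  have "(\<Sum>j\<in>B - A. \<Sum>i\<in>A - B. (u j)^2) \<le> (\<Sum>j\<in>B - A. \<Sum>i\<in>A - B. (u i)^2)"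
    using top by (intro sum_mono) (auto simp: abs_le_square_iff)
  then have "card (A - B) * (\<Sum>j\<in>B - A. (u j)^2) \<le> card (A - B) * (\<Sum>i\<in>A - B. (u i)^2)"
    using card_diff by (simp add: sum_distrib_left)
  moreover have "card (A - B) > 0 \<or> (A - B = {} \<and> B - A = {})"
    using fin card_diff by (metis card_0_eq finite_Diff gr0I)
  ultimately have "(\<Sum>j\<in>B - A. (u j)^2) \<le> (\<Sum>i\<in>A - B. (u i)^2)" by auto
  moreover have "(\<Sum>i\<in>B. (u i)^2) = (\<Sum>i\<in>A \<inter> B. (u i)^2) + (\<Sum>i\<in>B - A. (u i)^2)"
    using fin by (metis Int_commute sum.Int_Diff)
  moreover have "(\<Sum>i\<in>A. (u i)^2) = (\<Sum>i\<in>A \<inter> B. (u i)^2) + (\<Sum>i\<in>A - B. (u i)^2)"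
    using fin by (metis sum.Int_Diff)
  ultimately show ?thesis by linarith
qed

lemma L2_set_scale: "L2_set (\<lambda>i. a * f i) A = \<bar>a\<bar> * L2_set f A"
  unfolding L2_set_def by (simp add: power_mult_distrib real_sqrt_mult flip: sum_distrib_left)

lemma L2_set_le_of_subset:
  assumes "finite B" "A \<subseteq> B" "(\<Sum>i\<in>B. (g i)^2) \<le> \<eta>^2" "0 \<le> \<eta>"
  shows "L2_set g A \<le> \<eta>"
proof -
  have "(\<Sum>i\<in>A. (g i)^2) \<le> \<eta>^2" using assms(1-3) by (meson order_trans sum_mono2 zero_le_power2)
  then show ?thesis unfolding L2_set_def using assms(4) by (simp add: real_le_lsqrt)
qed

lemma selection_gap:
  fixes u v g :: "nat \<Rightarrow> real"
  assumes fin: "finite S" "finite T" and card_eq: "card S = card T"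
    and top: "\<forall>i\<in>S. \<forall>j\<in>T - S. \<bar>u j\<bar> \<le> \<bar>u i\<bar>"
    and u: "\<forall>i\<in>S \<union> T. u i = a * v i + g i"
    and g: "(\<Sum>i\<in>S \<union> T. (g i)^2) \<le> \<eta>^2" and \<eta>: "0 \<le> \<eta>"
  shows "\<bar>a\<bar> * (L2_set v T - L2_set v S) \<le> 2 * \<eta>"
proof -
  have "L2_set u T \<le> L2_set u S"
    unfolding L2_set_def using sum_sq_le_of_top_entries[OF fin card_eq top] by simp
  moreover have "L2_set g S \<le> \<eta>" and "L2_set g T \<le> \<eta>"
    using fin g \<eta> by (auto intro: L2_set_le_of_subset[of "S \<union> T"])
  moreover have "L2_set u S \<le> \<bar>a\<bar> * L2_set v S + L2_set g S"
  proof -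
    have "L2_set u S = L2_set (\<lambda>i. a * v i + g i) S" using u by (intro L2_set_cong) auto
    also have "\<dots> \<le> L2_set (\<lambda>i. a * v i) S + L2_set g S" by (rule L2_set_triangle_ineq)
    finally show ?thesis by (simp add: L2_set_scale)
  qed
  moreover have "\<bar>a\<bar> * L2_set v T \<le> L2_set u T + L2_set g T"
  proof -
    have "L2_set (\<lambda>i. a * v i) T = L2_set (\<lambda>i. u i + - g i) T" using u by (intro L2_set_cong) auto
    also have "\<dots> \<le> L2_set u T + L2_set (\<lambda>i. - g i) T" by (rule L2_set_triangle_ineq)
    finally show ?thesis by (simp add: L2_set_scale L2_set_def)
  qed
  ultimately show ?thesis by (simp add: algebra_simps)
qed

definition top_energy :: "(nat \<Rightarrow> real) \<Rightarrow> nat \<Rightarrow> nat \<Rightarrow> real" where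
  "top_energy v n q = (\<Sum>i=1..q. (sorted_abs v n ! (i - 1))^2)"

lemma sorted_abs_eq_map:
  "sorted_abs v n = map (\<lambda>i. \<bar>v i\<bar>) (rev (sort_key (\<lambda>i. \<bar>v i\<bar>) [0..<n]))"
proof -
  have "sort (map (\<lambda>i. \<bar>v i\<bar>) [0..<n]) = map (\<lambda>i. \<bar>v i\<bar>) (sort_key (\<lambda>i. \<bar>v i\<bar>) [0..<n])"
    by (rule properties_for_sort) (simp_all add: mset_map)
  then show ?thesis unfolding sorted_abs_def by (simp add: rev_map)
qed

lemma top_entries_with_top_energy:
  fixes v :: "nat \<Rightarrow> real"
  assumes "q \<le> n"
  obtains T where "top_entries n v q T" and "(\<Sum>i\<in>T. (v i)^2) = top_energy v n q"
proof -
  let ?f = "\<lambda>i. \<bar>v i\<bar>"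
  define ys where "ys = rev (sort_key ?f [0..<n])"
  have ys: "length ys = n" "distinct ys" "set ys = {..<n}"
    unfolding ys_def by (simp_all add: atLeast0LessThan)
  have sorted_abs_ys: "sorted_abs v n = map ?f ys" unfolding ys_def by (rule sorted_abs_eq_map)
  have "sorted_wrt (\<lambda>a b. ?f b \<le> ?f a) ys"
    unfolding ys_def sorted_wrt_rev by (metis sorted_map sorted_sort_key)
  then have decr: "\<forall>a\<in>set (take q ys). \<forall>b\<in>set (drop q ys). ?f b \<le> ?f a"
    by (metis append_take_drop_id sorted_wrt_append)
  define T where "T = set (take q ys)"
  have "top_entries n v q T"
    unfolding top_entries_def
  proof (intro conjI ballI)
    show "T \<subseteq> {..<n}" using set_take_subset[of q ys] ys T_def by simp
    show "card T = q" using ys assms by (simp add: T_def distinct_card)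
    fix i j assume "i \<in> T" "j \<in> {..<n} - T"
    then show "\<bar>v j\<bar> \<le> \<bar>v i\<bar>" using decr ys(3) T_def
      by (metis Diff_iff Un_iff append_take_drop_id set_append)
  qed
  moreover have "(\<Sum>i\<in>T. (v i)^2) = top_energy v n q"
  proof -
    have "top_energy v n q = (\<Sum>i<q. (sorted_abs v n ! i)^2)"
      unfolding top_energy_def by (simp add: sum.atLeast1_atMost_eq)
    also have "\<dots> = (\<Sum>i<q. (v (take q ys ! i))^2)"
      using ys assms by (intro sum.cong) (simp_all add: sorted_abs_ys)
    also have "\<dots> = (\<Sum>i\<in>T. (v i)^2)"
      using ys assms unfolding T_def
      by (simp add: sum.distinct_set_conv_list sum_list_sum_nth atLeast0LessThan)
    finally show ?thesis by simp
  qed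
  ultimately show thesis using that by blast
qed

lemma top_energy_mono: "p \<le> q \<Longrightarrow> top_energy v n p \<le> top_energy v n q"
  unfolding top_energy_def by (intro sum_mono2) auto

lemma top_energy_pos:
  assumes "1 \<le> q" "q \<le> n" and "(\<Sum>i<n. (v i)^2) \<noteq> 0"
  shows "0 < top_energy v n q"
proof -
  obtain T where T: "top_entries n v 1 T" and energy: "(\<Sum>i\<in>T. (v i)^2) = top_energy v n 1"
    using top_entries_with_top_energy[of 1 n v] assms by auto
  then have "card T = 1" unfolding top_entries_def by simp
  then obtain i0 where i0: "T = {i0}" by (rule card_1_singletonE)
  then have "i0 < n" and max: "\<forall>j<n. \<bar>v j\<bar> \<le> \<bar>v i0\<bar>"
    using T unfolding top_entries_def by auto
  have "v i0 \<noteq> 0"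
  proof
    assume "v i0 = 0"
    then have "\<forall>j<n. v j = 0" using max by fastforce
    then show False using assms(3) by simp
  qed
  moreover have "top_energy v n 1 = (v i0)^2" using energy i0 by simp
  ultimately have "0 < top_energy v n 1" by simp
  also have "\<dots> \<le> top_energy v n q" using assms(1) by (rule top_energy_mono)
  finally show ?thesis .
qed

lemma top_energy_sparse:
  assumes sparse: "card {i\<in>{..<n}. v i \<noteq> 0} \<le> k" and "k \<le> n"
  shows "top_energy v n k = (\<Sum>i<n. (v i)^2)"
proof -
  obtain T where T: "top_entries n v k T" and energy: "(\<Sum>i\<in>T. (v i)^2) = top_energy v n k"
    using top_entries_with_top_energy[OF assms(2)] by blast
  have outside: "v j = 0" if j: "j \<in> {..<n} - T" for j
  proof (rule ccontr)
    assume vj: "v j \<noteq> 0"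
    have T_sub: "T \<subseteq> {..<n}" and T_card: "card T = k" and T_top: "\<forall>i\<in>T. \<bar>v j\<bar> \<le> \<bar>v i\<bar>"
      using T j unfolding top_entries_def by auto
    then have "insert j T \<subseteq> {i\<in>{..<n}. v i \<noteq> 0}" using vj j by fastforce
    then have "card (insert j T) \<le> card {i\<in>{..<n}. v i \<noteq> 0}" by (intro card_mono) auto
    moreover have "card (insert j T) = Suc k"
      using T_sub T_card j by (simp add: finite_subset)
    ultimately show False using sparse by simp
  qed
  have "(\<Sum>i<n. (v i)^2) = (\<Sum>i\<in>T. (v i)^2)"
    using T outside unfolding top_entries_def by (intro sum.mono_neutral_right) auto
  then show ?thesis using energy by simp
qed

section \<open>Scalar inequalities\<close>

lemma mult_sqrt_div_le:
  fixes a b L m :: real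
  assumes "0 \<le> a" "0 \<le> b" "0 < m" "a^2 * L \<le> b^2 * m"
  shows "a * sqrt (L / m) \<le> b"
proof -
  have "a * sqrt (L / m) = sqrt (a^2 * (L / m))"
    using assms(1) by (simp only: real_sqrt_mult real_sqrt_abs abs_of_nonneg)
  also have "\<dots> \<le> b"
    using assms by (intro real_le_lsqrt) (simp_all add: field_simps)
  finally show ?thesis .
qed

lemma capture_of_selection_gap:
  fixes \<gamma> t t' c d :: real
  assumes \<gamma>: "0 < \<gamma>" "\<gamma> < 1" and t: "0 < t" "t \<le> t'"
    and align: "8/10 * \<gamma> * t \<le> c^2"
    and gap: "\<bar>c\<bar> * (sqrt t' - d) \<le> 6/10 * \<gamma> * (1 - sqrt \<gamma>) * t"
  shows "sqrt \<gamma> * sqrt t' \<le> d"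
proof (rule ccontr)
  assume "\<not> sqrt \<gamma> * sqrt t' \<le> d"
  then have d: "(1 - sqrt \<gamma>) * sqrt t' \<le> sqrt t' - d" by (simp add: algebra_simps)
  have sg: "0 < 1 - sqrt \<gamma>" using \<gamma> by simp
  have "6/10 * \<gamma> < sqrt (8/10 * \<gamma>)"
    using \<gamma> by (intro real_less_rsqrt) (simp add: power2_eq_square)
  then have "6/10 * \<gamma> * (1 - sqrt \<gamma>) * t < sqrt (8/10 * \<gamma>) * (1 - sqrt \<gamma>) * t"
    using sg t by simp
  also have "\<dots> = sqrt (8/10 * \<gamma> * t) * ((1 - sqrt \<gamma>) * sqrt t)"
  proof -
    have "sqrt (8/10 * \<gamma> * t) = sqrt (8/10 * \<gamma>) * sqrt t" by (rule real_sqrt_mult)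
    then show ?thesis using t by simp
  qed
  also have "\<dots> \<le> \<bar>c\<bar> * ((1 - sqrt \<gamma>) * sqrt t')"
    using align sg t by (intro mult_mono) (auto simp: real_le_lsqrt)
  also have "\<dots> \<le> \<bar>c\<bar> * (sqrt t' - d)" using d by (simp add: mult_left_mono)
  finally show False using gap by simp
qed

lemma le_sq_div_of_mult_sq_le:
  fixes l lam x E :: real
  assumes "0 < l" "l \<le> lam" "lam^2 * x \<le> E^2"
  shows "x \<le> (E / l)^2"
proof (cases "x \<le> 0")
  case False
  then have "l^2 * x \<le> E^2" using assms by (meson order_trans mult_right_mono power_mono less_imp_le not_le)
  then show ?thesis using assms(1) by (simp add: power_divide field_simps)
qed (simp add: order_trans)

lemma mult_one_minus_sqrt_le:
  fixes \<gamma> :: real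
  assumes "0 \<le> \<gamma>" "\<gamma> \<le> 1"
  shows "\<gamma> * (1 - sqrt \<gamma>) \<le> 1 - \<gamma>"
proof -
  have "\<gamma> * (1 - sqrt \<gamma>) \<le> (1 + sqrt \<gamma>) * (1 - sqrt \<gamma>)"
    using assms by (intro mult_right_mono) (auto simp: add_increasing2)
  also have "\<dots> = 1 - \<gamma>" using assms by (simp add: algebra_simps)
  finally show ?thesis .
qed

lemma sqrt_one_minus_sq_le:
  fixes \<gamma> \<alpha> c b :: real
  assumes "\<gamma> \<le> \<alpha>" "\<alpha> - c^2 \<le> b^2" "\<gamma> \<le> 1" "0 \<le> b"
  shows "sqrt (1 - c^2) \<le> sqrt (1 - \<gamma>) + b"
proof -
  have "sqrt (1 - c^2) \<le> sqrt ((1 - \<gamma>) + b^2)" using assms(1,2) by simp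
  also have "\<dots> \<le> sqrt (1 - \<gamma>) + sqrt (b^2)" using assms(3) by (intro sqrt_add_le_add_sqrt) auto
  finally show ?thesis using assms(4) by simp
qed

section \<open>The spiked model\<close>

locale spiked_model =
  fixes C0 \<theta> :: real and n m k :: nat and v :: "nat \<Rightarrow> real" and G :: "nat \<Rightarrow> nat \<Rightarrow> real"
  assumes C0_nonneg: "0 \<le> C0" and \<theta>_pos: "0 < \<theta>"
    and k_pos: "1 \<le> k" and k_le_n: "k \<le> n"
    and G_sym: "\<And>i j. G i j = G j i"
    and v_unit: "(\<Sum>i<n. (v i)^2) = 1"
    and v_sparse: "card {i\<in>{..<n}. v i \<noteq> 0} \<le> k"
    and noise_event: "event_E C0 n m \<theta> (\<lambda>i j. G i j - \<theta> * v i * v j)"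
begin

definition noise :: "nat \<Rightarrow> nat \<Rightarrow> real" where
  "noise i j = G i j - \<theta> * v i * v j"

definition noise_level :: "nat \<Rightarrow> real" where
  "noise_level q = C0 * (1 + \<theta>) * sqrt (real q * ln (real n) / real m)"

lemma G_spiked: "G i j = \<theta> * v i * v j + noise i j"
  by (simp add: noise_def)

lemma G_apply_split:
  "(\<Sum>j\<in>S. G i j * y j) = \<theta> * (\<Sum>j\<in>S. y j * v j) * v i + (\<Sum>j\<in>S. noise i j * y j)"
  by (simp add: G_spiked sum.distrib sum_distrib_left algebra_simps)

lemma noise_level_nonneg: "0 \<le> noise_level q"
proof -
  have "0 \<le> ln (real n)" using k_pos k_le_n by simp
  then show ?thesis unfolding noise_level_def using C0_nonneg \<theta>_pos by simp
qed

lemma noise_level_mono: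
  assumes "p \<le> q"
  shows "noise_level p \<le> noise_level q"
proof -
  have "0 \<le> ln (real n)" using k_pos k_le_n by simp
  then have "real p * ln (real n) / real m \<le> real q * ln (real n) / real m"
    using assms by (intro divide_right_mono mult_right_mono) auto
  then show ?thesis unfolding noise_level_def using C0_nonneg \<theta>_pos
    by (intro mult_left_mono real_sqrt_le_mono) auto
qed

lemma noise_level_mult: "noise_level (a * q) = sqrt (real a) * noise_level q"
proof -
  have "real (a * q) * ln (real n) / real m = real a * (real q * ln (real n) / real m)" by simp
  then show ?thesis unfolding noise_level_def by (simp only: real_sqrt_mult mult_ac)
qed

lemma noise_spec_norm:
  assumes "X \<subseteq> {..<n}" "X \<noteq> {}"
  shows "spec_norm_sub noise X X \<le> noise_level (card X)"
proof -
  have "finite X" using assms(1) finite_subset by blast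
  then have "card X \<in> {1..n}" using assms card_mono[OF _ assms(1)] by (auto simp: Suc_le_eq card_gt_0_iff)
  moreover have "noise = (\<lambda>i j. G i j - \<theta> * v i * v j)" by (simp add: noise_def fun_eq_iff)
  ultimately show ?thesis using noise_event assms(1) unfolding event_E_def noise_level_def by auto
qed

lemma noise_apply_bound:
  assumes "X \<subseteq> {..<n}" "X \<noteq> {}"
  shows "(\<Sum>i\<in>X. (\<Sum>j\<in>X. noise i j * y j)^2) \<le> (noise_level (card X))^2 * (\<Sum>j\<in>X. (y j)^2)"
  using spec_norm_sub_bound[OF _ noise_spec_norm[OF assms]] assms(1) finite_subset by blast

lemma noise_quad_form_bound:
  assumes "X \<subseteq> {..<n}" "X \<noteq> {}"
  shows "\<bar>quad_form noise X y\<bar> \<le> noise_level (card X) * (\<Sum>j\<in>X. (y j)^2)"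
  using quad_form_abs_le[OF _ noise_spec_norm[OF assms] noise_level_nonneg] assms(1) finite_subset by blast

lemma diag_deviation:
  assumes "i < n"
  shows "\<bar>G i i - \<theta> * (v i)^2\<bar> \<le> noise_level 1"
  using noise_quad_form_bound[of "{i}" "\<lambda>_. 1"] assms
  by (simp add: quad_form_def noise_def power2_eq_square mult.assoc)

lemma residual_bound:
  assumes "S \<subseteq> X" "X \<subseteq> {..<n}" and top: "top_eigvec G S e"
  shows "(\<Sum>i\<in>X. (\<Sum>j\<in>S. noise i j * e j)^2) \<le> (noise_level (card X))^2"
proof -
  have fin: "finite X" using assms(2) finite_subset by blast
  have extend: "(\<Sum>j\<in>S. f j * e j) = (\<Sum>j\<in>X. f j * e j)" for f
    using fin assms(1) top_eigvecD(3)[OF top] by (intro sum.mono_neutral_left) auto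
  have "(\<Sum>j\<in>X. (e j)^2) = 1"
    using fin assms(1) top_eigvecD[OF top] by (subst sum.mono_neutral_left[of X S, symmetric]) auto
  moreover have "X \<noteq> {}" using assms(1) top_eigvecD(2)[OF top] by blast
  ultimately show ?thesis using noise_apply_bound[OF assms(2), of e] unfolding extend by simp
qed

lemma top_eigvec_bounds:
  assumes "S \<subseteq> {..<n}" and top: "top_eigvec G S e" and v_S: "(\<Sum>i\<in>S. (v i)^2) \<noteq> 0"
  obtains lam where "\<forall>i\<in>S. (\<Sum>j\<in>S. G i j * e j) = lam * e i"
    and "\<theta> * (\<Sum>i\<in>S. (v i)^2) - noise_level (card S) \<le> lam"
    and "lam \<le> \<theta> * (\<Sum>i\<in>S. e i * v i)^2 + noise_level (card S)"
  using top_eigvec_rank_one_bounds[OF _ top _ noise_quad_form_bound[OF assms(1) top_eigvecD(2)[OF top]] v_S]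
    G_sym G_spiked that by blast

lemma noise_small_of_sample_size:
  assumes m: "1 \<le> m" and \<gamma>: "0 < \<gamma>" "\<gamma> < 1" and p: "1 \<le> p" "p \<le> k"
    and sample: "real m \<ge> 100 * C0^2 * (1 + \<theta>)^2 / (\<theta>^2 * \<gamma>^2 * (1 - sqrt \<gamma>)^2)
                   * Max ((\<lambda>p. real p * (struct_fun v n p)^2) ` {1..k}) * ln (real n)"
  shows "noise_level p \<le> \<theta> * \<gamma> * (1 - sqrt \<gamma>) * top_energy v n p / 10"
proof -
  define t where "t = top_energy v n p"
  define D where "D = \<theta>^2 * \<gamma>^2 * (1 - sqrt \<gamma>)^2"
  have t: "0 < t" using top_energy_pos[OF p(1)] p(2) k_le_n v_unit by (simp add: t_def)
  have D: "0 < D" using \<theta>_pos \<gamma> by (simp add: D_def)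
  have ln_n: "0 \<le> ln (real n)" using k_pos k_le_n by simp
  define K where "K = 100 * C0^2 * (1 + \<theta>)^2 / D"
  have "real p * (1 / t)^2 \<le> Max ((\<lambda>p. real p * (struct_fun v n p)^2) ` {1..k})"
    using p by (intro Max_ge) (auto simp: struct_fun_def t_def top_energy_def)
  then have "K * (real p * (1 / t)^2) * ln (real n)
      \<le> K * Max ((\<lambda>p. real p * (struct_fun v n p)^2) ` {1..k}) * ln (real n)"
    using D ln_n by (intro mult_right_mono mult_left_mono) (simp_all add: K_def)
  also have "\<dots> \<le> real m" using sample by (simp add: K_def D_def)
  finally have "100 * C0^2 * (1 + \<theta>)^2 * (real p * ln (real n)) \<le> D * t^2 * real m"
    using D t by (simp add: K_def field_simps)
  also have "D * t^2 * real m = 100 * ((\<theta> * \<gamma> * (1 - sqrt \<gamma>) * t / 10)^2 * real m)"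
    by (simp add: D_def power_mult_distrib power_divide)
  finally have "(C0 * (1 + \<theta>))^2 * (real p * ln (real n)) \<le> (\<theta> * \<gamma> * (1 - sqrt \<gamma>) * t / 10)^2 * real m"
    by (simp add: power_mult_distrib mult.assoc)
  then show ?thesis
    unfolding noise_level_def t_def using C0_nonneg \<theta>_pos \<gamma> t m
    by (intro mult_sqrt_div_le) (simp_all add: t_def)
qed

lemma power_step_residual:
  assumes S: "S \<subseteq> {..<n}" "card S = p" "1 \<le> p" and top: "top_eigvec G S e"
    and S': "S' \<subseteq> {..<n}" "card S' = Suc p" and T: "T \<subseteq> {..<n}" "card T = Suc p"
  shows "(\<Sum>i\<in>S' \<union> T. (\<Sum>j\<in>S. noise i j * e j)^2) \<le> (3 * noise_level p)^2"
proof -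
  define X where "X = S \<union> S' \<union> T"
  have X: "S \<subseteq> X" "X \<subseteq> {..<n}" "finite X" using S S' T by (auto simp: X_def finite_subset)
  have "card X \<le> 3 * p + 2"
    using card_Un_le[of "S \<union> S'" T] card_Un_le[of S S'] S S' T by (simp add: X_def)
  have level: "noise_level (card X) \<le> 3 * noise_level p"
  proof -
    have "noise_level (card X) \<le> noise_level (9 * p)"
      using \<open>card X \<le> 3 * p + 2\<close> S(3) by (intro noise_level_mono) simp
    also have "\<dots> = 3 * noise_level p" by (simp add: noise_level_mult)
    finally show ?thesis .
  qed
  have "(\<Sum>i\<in>S' \<union> T. (\<Sum>j\<in>S. noise i j * e j)^2) \<le> (\<Sum>i\<in>X. (\<Sum>j\<in>S. noise i j * e j)^2)"
    using X(3) by (intro sum_mono2) (auto simp: X_def)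
  also have "\<dots> \<le> (noise_level (card X))^2" by (rule residual_bound[OF X(1,2) top])
  also have "\<dots> \<le> (3 * noise_level p)^2" using level noise_level_nonneg by (intro power_mono) auto
  finally show ?thesis .
qed

lemma power_step_gap:
  assumes S: "S \<subseteq> {..<n}" "card S = p" "1 \<le> p" and top: "top_eigvec G S e"
    and sel: "top_entries n (\<lambda>i. \<Sum>j<n. G i j * e j) (Suc p) S'"
    and T: "top_entries n v (Suc p) T"
  shows "\<theta> * \<bar>\<Sum>j\<in>S. e j * v j\<bar> * (L2_set v T - L2_set v S') \<le> 6 * noise_level p"
proof -
  define c where "c = (\<Sum>j\<in>S. e j * v j)"
  define g where "g i = (\<Sum>j\<in>S. noise i j * e j)" for i
  have S'_sub: "S' \<subseteq> {..<n}" "card S' = Suc p" and T_sub: "T \<subseteq> {..<n}" "card T = Suc p"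
    using sel T unfolding top_entries_def by auto
  have "(\<Sum>j<n. G i j * e j) = \<theta> * c * v i + g i" for i
  proof -
    have "(\<Sum>j<n. G i j * e j) = (\<Sum>j\<in>S. G i j * e j)"
      using S(1) top_eigvecD(3)[OF top] by (intro sum.mono_neutral_right) auto
    then show ?thesis by (simp add: G_apply_split c_def g_def)
  qed
  then have "\<bar>\<theta> * c\<bar> * (L2_set v T - L2_set v S') \<le> 2 * (3 * noise_level p)"
    using sel S'_sub T_sub power_step_residual[OF S top S'_sub T_sub] noise_level_nonneg
    by (intro selection_gap[where u = "\<lambda>i. \<Sum>j<n. G i j * e j" and g = g])
      (auto simp: top_entries_def finite_subset g_def)
  then show ?thesis using \<theta>_pos by (simp add: c_def abs_mult)
qed

end

section \<open>Analysis of SEP\<close>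

text \<open>The sample-size hypothesis enters only through \<open>noise_small\<close>, see
  \<open>noise_small_of_sample_size\<close>.\<close>
locale sep_regime = spiked_model +
  fixes \<gamma> :: real
  assumes \<gamma>_pos: "0 < \<gamma>" and \<gamma>_lt_1: "\<gamma> < 1"
    and noise_small: "\<And>p. 1 \<le> p \<Longrightarrow> p \<le> k \<Longrightarrow>
                         noise_level p \<le> \<theta> * \<gamma> * (1 - sqrt \<gamma>) * top_energy v n p / 10"
begin

definition good_support :: "nat \<Rightarrow> nat set \<Rightarrow> bool" where
  "good_support p S \<longleftrightarrow> S \<subseteq> {..<n} \<and> card S = p \<and> \<gamma> * top_energy v n p \<le> (\<Sum>i\<in>S. (v i)^2)"

lemma noise_small_weak:
  assumes "1 \<le> p" "p \<le> k"
  shows "noise_level p \<le> \<theta> * \<gamma> * top_energy v n p / 10"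
proof -
  have "0 \<le> top_energy v n p" unfolding top_energy_def by (simp add: sum_nonneg)
  then have "\<theta> * \<gamma> * (1 - sqrt \<gamma>) * top_energy v n p \<le> \<theta> * \<gamma> * top_energy v n p"
    using \<theta>_pos \<gamma>_pos by (simp add: mult_right_mono mult_left_mono)
  then show ?thesis using noise_small[OF assms] by simp
qed

lemma first_support:
  assumes run: "sep_run G n k Sseq e vhat"
  shows "good_support 1 (Sseq 1)"
proof -
  obtain j where j: "j < n" "Sseq 1 = {j}" and j_max: "\<forall>i<n. \<bar>G i i\<bar> \<le> \<bar>G j j\<bar>"
    using run unfolding sep_run_def by blast
  obtain T where T: "top_entries n v 1 T" and energy: "(\<Sum>i\<in>T. (v i)^2) = top_energy v n 1"
    using top_entries_with_top_energy[of 1 n v] k_pos k_le_n by auto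
  then have "card T = 1" unfolding top_entries_def by simp
  then obtain i0 where i0: "T = {i0}" by (rule card_1_singletonE)
  then have "i0 < n" using T unfolding top_entries_def by auto
  define t where "t = top_energy v n 1"
  have "\<theta> * t - noise_level 1 \<le> G i0 i0"
    using diag_deviation[OF \<open>i0 < n\<close>] energy i0 by (simp add: t_def abs_le_iff)
  also have "\<dots> \<le> \<bar>G j j\<bar>" using j_max \<open>i0 < n\<close> by (meson abs_ge_self order_trans)
  finally have lower: "\<theta> * t - noise_level 1 \<le> \<bar>G j j\<bar>" .
  have "0 \<le> \<theta> * (v j)^2" using \<theta>_pos by simp
  then have upper: "\<bar>G j j\<bar> \<le> \<theta> * (v j)^2 + noise_level 1"
    using diag_deviation[OF j(1)] by (simp add: abs_le_iff)
  have "2 * noise_level 1 \<le> \<theta> * t * (1 - \<gamma>)"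
  proof -
    have "0 \<le> \<theta> * t" using \<theta>_pos top_energy_pos[of 1 n v] k_pos k_le_n v_unit by (simp add: t_def)
    then have "\<theta> * t * (\<gamma> * (1 - sqrt \<gamma>)) \<le> \<theta> * t * (1 - \<gamma>)"
      using mult_one_minus_sqrt_le \<gamma>_pos \<gamma>_lt_1 by (intro mult_left_mono) auto
    moreover have "10 * noise_level 1 \<le> \<theta> * t * (\<gamma> * (1 - sqrt \<gamma>))"
      using noise_small[of 1] k_pos by (simp add: t_def mult_ac)
    ultimately show ?thesis using noise_level_nonneg[of 1] by linarith
  qed
  with lower upper have "\<theta> * (\<gamma> * t) \<le> \<theta> * (v j)^2" by (simp add: algebra_simps)
  then have "\<gamma> * t \<le> (v j)^2" using \<theta>_pos by simp
  then show ?thesis unfolding good_support_def using j t_def by simp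
qed

lemma support_alignment:
  assumes p: "1 \<le> p" "p \<le> k" and S: "good_support p S" and top: "top_eigvec G S e"
  shows "8/10 * \<gamma> * top_energy v n p \<le> (\<Sum>i\<in>S. e i * v i)^2"
proof -
  define t where "t = top_energy v n p"
  have t: "0 < t" using top_energy_pos[OF p(1)] p(2) k_le_n v_unit by (simp add: t_def)
  have S_sub: "S \<subseteq> {..<n}" "card S = p" and captured: "\<gamma> * t \<le> (\<Sum>i\<in>S. (v i)^2)"
    using S unfolding good_support_def t_def by auto
  have "0 < \<gamma> * t" using \<gamma>_pos t by simp
  then have "(\<Sum>i\<in>S. (v i)^2) \<noteq> 0" using captured by linarith
  then obtain lam where lower: "\<theta> * (\<Sum>i\<in>S. (v i)^2) - noise_level p \<le> lam"
      and upper: "lam \<le> \<theta> * (\<Sum>i\<in>S. e i * v i)^2 + noise_level p"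
    using top_eigvec_bounds[OF S_sub(1) top] S_sub(2) by metis
  have "\<theta> * (\<gamma> * t) \<le> \<theta> * (\<Sum>i\<in>S. (v i)^2)" using captured \<theta>_pos by simp
  moreover have "noise_level p \<le> \<theta> * \<gamma> * t / 10" using noise_small_weak[OF p] by (simp add: t_def)
  ultimately have "\<theta> * (8/10 * \<gamma> * t) \<le> \<theta> * (\<Sum>i\<in>S. e i * v i)^2"
    using lower upper by (simp add: algebra_simps)
  then show ?thesis using \<theta>_pos by (simp add: t_def)
qed

lemma next_support:
  assumes run: "sep_run G n k Sseq e vhat" and p: "1 \<le> p" "Suc p \<le> k"
    and good: "good_support p (Sseq p)"
  shows "good_support (Suc p) (Sseq (Suc p))"
proof -
  define S S' where "S = Sseq p" and "S' = Sseq (Suc p)"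
  have good_S: "good_support p S" using good by (simp add: S_def)
  have top: "top_eigvec G S (e p)" and sel: "top_entries n (\<lambda>i. \<Sum>j<n. G i j * e p j) (Suc p) S'"
    using run p unfolding sep_run_def S_def S'_def by auto
  obtain T where T: "top_entries n v (Suc p) T" and energy: "(\<Sum>i\<in>T. (v i)^2) = top_energy v n (Suc p)"
    using top_entries_with_top_energy p k_le_n by (metis le_trans)
  have S_sub: "S \<subseteq> {..<n}" "card S = p" using good_S unfolding good_support_def by auto
  have S'_sub: "S' \<subseteq> {..<n}" "card S' = Suc p" using sel unfolding top_entries_def by auto
  define c where "c = (\<Sum>j\<in>S. e p j * v j)"
  have "\<theta> * (\<bar>c\<bar> * (sqrt (top_energy v n (Suc p)) - L2_set v S')) \<le> 6 * noise_level p"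
    using power_step_gap[OF S_sub p(1) top sel T] energy by (simp add: c_def L2_set_def mult.assoc)
  moreover have "\<theta> * (6/10 * \<gamma> * (1 - sqrt \<gamma>) * top_energy v n p)
      = 6/10 * (\<theta> * \<gamma> * (1 - sqrt \<gamma>) * top_energy v n p)"
    by (simp add: field_simps)
  ultimately have "\<theta> * (\<bar>c\<bar> * (sqrt (top_energy v n (Suc p)) - L2_set v S'))
      \<le> \<theta> * (6/10 * \<gamma> * (1 - sqrt \<gamma>) * top_energy v n p)"
    using noise_small[OF p(1)] p(2) by linarith
  then have "\<bar>c\<bar> * (sqrt (top_energy v n (Suc p)) - L2_set v S')
      \<le> 6/10 * \<gamma> * (1 - sqrt \<gamma>) * top_energy v n p"
    using \<theta>_pos by (rule mult_left_le_imp_le)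
  then have "sqrt \<gamma> * sqrt (top_energy v n (Suc p)) \<le> L2_set v S'"
    using support_alignment[OF p(1) _ good_S top] p(2) \<gamma>_pos \<gamma>_lt_1 top_energy_mono[of p "Suc p"]
      top_energy_pos[OF p(1), of n v] k_le_n v_unit
    by (intro capture_of_selection_gap[where c = c]) (auto simp: c_def S_def mult_ac)
  then have "\<gamma> * top_energy v n (Suc p) \<le> (\<Sum>i\<in>S'. (v i)^2)"
    unfolding L2_set_def by (simp add: real_sqrt_mult[symmetric])
  then show ?thesis unfolding good_support_def using S'_sub S'_def by simp
qed

lemma support_invariant:
  assumes run: "sep_run G n k Sseq e vhat" and "1 \<le> p" "p \<le> k"
  shows "good_support p (Sseq p)"
  using assms(2,3)
proof (induction p rule: nat_induct_at_least)
  case base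
  show ?case by (rule first_support[OF run])
next
  case (Suc p)
  then show ?case using next_support[OF run] by simp
qed

lemma final_support_captures:
  assumes run: "sep_run G n k Sseq e vhat"
  shows "Sseq k \<subseteq> {..<n}" and "card (Sseq k) = k" and "\<gamma> \<le> (\<Sum>i\<in>Sseq k. (v i)^2)"
  using support_invariant[OF run k_pos order_refl] top_energy_sparse[OF v_sparse k_le_n] v_unit
  unfolding good_support_def by auto

lemma output_eigenvalue:
  assumes run: "sep_run G n k Sseq e vhat"
  obtains lam where "\<forall>i\<in>Sseq k. (\<Sum>j\<in>Sseq k. G i j * vhat j) = lam * vhat i"
    and "\<theta> * \<gamma> / 2 \<le> lam"
proof -
  have top: "top_eigvec G (Sseq k) vhat" using run unfolding sep_run_def by auto
  note S = final_support_captures[OF run]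
  have "top_energy v n k = 1" using top_energy_sparse[OF v_sparse k_le_n] v_unit by simp
  then have small: "noise_level k \<le> \<theta> * \<gamma> / 10" using noise_small_weak[OF k_pos order_refl] by simp
  have "(\<Sum>i\<in>Sseq k. (v i)^2) \<noteq> 0" using S(3) \<gamma>_pos by linarith
  then obtain lam where eig: "\<forall>i\<in>Sseq k. (\<Sum>j\<in>Sseq k. G i j * vhat j) = lam * vhat i"
      and lower: "\<theta> * (\<Sum>i\<in>Sseq k. (v i)^2) - noise_level k \<le> lam"
    using top_eigvec_bounds[OF S(1) top] S(2) by metis
  have "\<theta> * \<gamma> \<le> \<theta> * (\<Sum>i\<in>Sseq k. (v i)^2)" using S(3) \<theta>_pos by simp
  moreover have "0 < \<theta> * \<gamma>" using \<theta>_pos \<gamma>_pos by simp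
  ultimately have "\<theta> * \<gamma> / 2 \<le> lam" using lower small by linarith
  with eig show thesis by (rule that)
qed

lemma output_sin_angle:
  assumes run: "sep_run G n k Sseq e vhat"
  shows "sin_angle n vhat v \<le> sqrt (1 - \<gamma>) + 2 * noise_level k / (\<theta> * \<gamma>)"
proof -
  define S where "S = Sseq k"
  define \<alpha> where "\<alpha> = (\<Sum>i\<in>S. (v i)^2)"
  define E where "E = noise_level k"
  have top: "top_eigvec G S vhat" using run unfolding sep_run_def S_def by auto
  have S_sub: "S \<subseteq> {..<n}" "card S = k" and captured: "\<gamma> \<le> \<alpha>"
    using final_support_captures[OF run] unfolding S_def \<alpha>_def by auto
  obtain lam where eig: "\<forall>i\<in>S. (\<Sum>j\<in>S. G i j * vhat j) = lam * vhat i" and lam: "\<theta> * \<gamma> / 2 \<le> lam"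
    using output_eigenvalue[OF run] unfolding S_def by blast
  have "\<alpha> \<le> (\<Sum>i<n. (v i)^2)" unfolding \<alpha>_def using S_sub(1) by (intro sum_mono2) auto
  then have \<alpha>_le_1: "\<alpha> \<le> 1" using v_unit by simp
  define c where "c = (\<Sum>i\<in>S. vhat i * v i)"
  define g where "g i = (\<Sum>j\<in>S. noise i j * vhat j)" for i
  have "lam^2 * (\<alpha> - c^2) \<le> \<alpha> * (\<Sum>i\<in>S. (g i)^2)"
    unfolding \<alpha>_def using eig top_eigvecD(1)[OF top]
    by (intro misalignment_le_residual) (auto simp: G_apply_split c_def g_def)
  also have "\<dots> \<le> 1 * E^2"
    using \<alpha>_le_1 captured \<gamma>_pos residual_bound[OF order_refl S_sub(1) top] S_sub(2)
    by (intro mult_mono) (auto simp: g_def E_def sum_nonneg)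
  finally have "\<alpha> - c^2 \<le> (E / (\<theta> * \<gamma> / 2))^2"
    using \<theta>_pos \<gamma>_pos by (intro le_sq_div_of_mult_sq_le[OF _ lam]) simp_all
  then have "sqrt (1 - c^2) \<le> sqrt (1 - \<gamma>) + 2 * E / (\<theta> * \<gamma>)"
    using captured \<gamma>_lt_1 \<theta>_pos \<gamma>_pos noise_level_nonneg[of k]
    by (intro sqrt_one_minus_sq_le[where \<alpha> = \<alpha>]) (simp_all add: E_def mult.commute)
  moreover have "(\<Sum>i<n. vhat i * v i) = c"
    unfolding c_def using S_sub top_eigvecD(3)[OF top] by (intro sum.mono_neutral_right) auto
  ultimately show ?thesis unfolding sin_angle_def by (simp add: E_def)
qed

end

lemma sep_guarantee:
  fixes C0 \<theta> \<gamma> :: real and n m k :: nat and v :: "nat \<Rightarrow> real" and x :: "nat \<Rightarrow> nat \<Rightarrow> real"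
  assumes "0 \<le> C0" "1 \<le> m" "0 < \<theta>" "1 \<le> k" "k \<le> n"
    and "(\<Sum>i<n. (v i)^2) = 1" "card {i\<in>{..<n}. v i \<noteq> 0} \<le> k"
    and "event_E C0 n m \<theta> (\<lambda>i j. sample_Gamma m x i j - \<theta> * v i * v j)"
    and "0 < \<gamma>" "\<gamma> < 1"
    and "real m \<ge> 100 * C0^2 * (1 + \<theta>)^2 / (\<theta>^2 * \<gamma>^2 * (1 - sqrt \<gamma>)^2)
                   * Max ((\<lambda>p. real p * (struct_fun v n p)^2) ` {1..k}) * ln (real n)"
    and run: "sep_run (sample_Gamma m x) n k Sseq e vhat"
  shows "sqrt \<gamma> \<le> sqrt (\<Sum>i\<in>Sseq k. (v i)^2) \<and>
         sin_angle n vhat v \<le> sqrt (1 - \<gamma>)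
           + 2 * C0 * (1 + \<theta>) / (\<theta> * \<gamma>) * sqrt (real k * ln (real n) / real m)"
proof -
  interpret spiked_model C0 \<theta> n m k v "sample_Gamma m x"
    using assms by unfold_locales (simp_all add: sample_Gamma_def mult.commute)
  interpret sep_regime C0 \<theta> n m k v "sample_Gamma m x" \<gamma>
    using assms noise_small_of_sample_size by unfold_locales simp_all
  have captured: "\<gamma> \<le> (\<Sum>i\<in>Sseq k. (v i)^2)" by (rule final_support_captures(3)[OF run])
  have level: "2 * noise_level k / (\<theta> * \<gamma>)
      = 2 * C0 * (1 + \<theta>) / (\<theta> * \<gamma>) * sqrt (real k * ln (real n) / real m)"
    unfolding noise_level_def by simp
  have "sin_angle n vhat v \<le> sqrt (1 - \<gamma>)
      + 2 * C0 * (1 + \<theta>) / (\<theta> * \<gamma>) * sqrt (real k * ln (real n) / real m)"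
    using output_sin_angle[OF run] unfolding level .
  with captured show ?thesis by simp
qed

theorem theorem1:
  assumes C0pos: "C0 > 0"
  shows "\<exists>C1 > 0. \<exists>C2 > 0.
    \<forall>(n::nat) (m::nat) (k::nat) (\<theta>::real) (v::nat \<Rightarrow> real) (x::nat \<Rightarrow> nat \<Rightarrow> real).
      n \<ge> 2 \<longrightarrow> m \<ge> 1 \<longrightarrow> \<theta> > 0 \<longrightarrow> 1 \<le> k \<longrightarrow> k \<le> n \<longrightarrow>
      (\<forall>i\<ge>n. v i = 0) \<longrightarrow> (\<Sum>i<n. (v i)^2) = 1 \<longrightarrow> card {i\<in>{..<n}. v i \<noteq> 0} \<le> k \<longrightarrow>
      event_E C0 n m \<theta> (\<lambda>i j. sample_Gamma m x i j - \<theta> * v i * v j) \<longrightarrow>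
      (\<forall>\<gamma>::real. 0 < \<gamma> \<longrightarrow> \<gamma> < 1 \<longrightarrow>
         real m \<ge> C1 * (1 + \<theta>)^2 / (\<theta>^2 * \<gamma>^2 * (1 - sqrt \<gamma>)^2)
                   * Max ((\<lambda>p. real p * (struct_fun v n p)^2) ` {1..k}) * ln (real n) \<longrightarrow>
         (\<forall>Sseq e vhat. sep_run (sample_Gamma m x) n k Sseq e vhat \<longrightarrow>
            sqrt (\<Sum>i\<in>Sseq k. (v i)^2) \<ge> sqrt \<gamma> \<and>
            sin_angle n vhat v \<le> sqrt (1 - \<gamma>)
              + C2 * (1 + \<theta>) / (\<theta> * \<gamma>) * sqrt (real k * ln (real n) / real m)))"
proof -
  have "0 < 100 * C0^2" and "0 < 2 * C0" using C0pos by simp_all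
  then show ?thesis using sep_guarantee[OF less_imp_le[OF C0pos]] by blast
qed

end
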